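(* Let $p\in(1,\infty)$. The space $X_p^{1,\omega}$ does not admit an equivalent asymptotically uniformly smooth norm.
   Context: Define $X^{1,0}_p=\mathbb R$ and inductively $X^{1,k}_p=\mathbb R\oplus_1\ell_p(X^{1,k-1}_p)$ (the $\ell_1$-direct sum of $\mathbb R$ with the $\ell_p$-sum of countably many copies of $X^{1,k-1}_p$), and $X^{1,\omega}_p=(\bigoplus_{k=0}^\infty X^{1,k}_p)_{\ell_p}$. For a Banach space $X$ the modulus of asymptotic uniform smoothness is $\bar\rho_X(t)=\sup_{x\in S_X}\inf_{Y}\sup_{y\in S_Y}\|x+ty\|-1$, the infimum over closed finite-codimensional subspaces $Y$; $X$ is asymptotically uniformly smooth if $\lim_{t\to0^+}\bar\rho_X(t)/t=0$. *)

theory Defs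
  imports "HOL-Analysis.Analysis"
begin

text \<open>Elements of X^{1,k}_p are coded as real functions on finite sequences of naturals
 (nat list): the coordinate [] is the R-summand, the coordinates n#s belong to the n-th
 copy of X^{1,k-1}_p in the l_p-sum.  Coordinates of length > k are zero.\<close>

fun inX :: "real \<Rightarrow> nat \<Rightarrow> (nat list \<Rightarrow> real) \<Rightarrow> bool"
and Xnorm :: "real \<Rightarrow> nat \<Rightarrow> (nat list \<Rightarrow> real) \<Rightarrow> real" where
  "inX p 0 f = (\<forall>s. s \<noteq> [] \<longrightarrow> f s = 0)"
| "inX p (Suc k) f = ((\<forall>n. inX p k (\<lambda>s. f (n # s)))
      \<and> summable (\<lambda>n. Xnorm p k (\<lambda>s. f (n # s)) powr p))"
| "Xnorm p 0 f = \<bar>f []\<bar>"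
| "Xnorm p (Suc k) f = \<bar>f []\<bar> + (\<Sum>n. Xnorm p k (\<lambda>s. f (n # s)) powr p) powr (1 / p)"

text \<open>X^{1,omega}_p = l_p-sum over k of X^{1,k}_p; the k-th component is x k.\<close>

definition Xw :: "real \<Rightarrow> (nat \<Rightarrow> nat list \<Rightarrow> real) set" where
  "Xw p = {x. (\<forall>k. inX p k (x k)) \<and> summable (\<lambda>k. Xnorm p k (x k) powr p)}"

definition Xwnorm :: "real \<Rightarrow> (nat \<Rightarrow> nat list \<Rightarrow> real) \<Rightarrow> real" where
  "Xwnorm p x = (\<Sum>k. Xnorm p k (x k) powr p) powr (1 / p)"

definition vadd :: "(nat \<Rightarrow> nat list \<Rightarrow> real) \<Rightarrow> (nat \<Rightarrow> nat list \<Rightarrow> real) \<Rightarrow> (nat \<Rightarrow> nat list \<Rightarrow> real)" where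
  "vadd x y = (\<lambda>k s. x k s + y k s)"

definition vscale :: "real \<Rightarrow> (nat \<Rightarrow> nat list \<Rightarrow> real) \<Rightarrow> (nat \<Rightarrow> nat list \<Rightarrow> real)" where
  "vscale a x = (\<lambda>k s. a * x k s)"

definition vsub :: "(nat \<Rightarrow> nat list \<Rightarrow> real) \<Rightarrow> (nat \<Rightarrow> nat list \<Rightarrow> real) \<Rightarrow> (nat \<Rightarrow> nat list \<Rightarrow> real)" where
  "vsub x y = (\<lambda>k s. x k s - y k s)"

definition equiv_norm :: "real \<Rightarrow> ((nat \<Rightarrow> nat list \<Rightarrow> real) \<Rightarrow> real) \<Rightarrow> bool" where
  "equiv_norm p N \<longleftrightarrow>
     (\<forall>x\<in>Xw p. \<forall>y\<in>Xw p. N (vadd x y) \<le> N x + N y)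
   \<and> (\<forall>a. \<forall>x\<in>Xw p. N (vscale a x) = \<bar>a\<bar> * N x)
   \<and> (\<exists>c C. 0 < c \<and> 0 < C \<and> (\<forall>x\<in>Xw p. c * Xwnorm p x \<le> N x \<and> N x \<le> C * Xwnorm p x))"

definition fincodim_subspace :: "real \<Rightarrow> ((nat \<Rightarrow> nat list \<Rightarrow> real) \<Rightarrow> real)
    \<Rightarrow> (nat \<Rightarrow> nat list \<Rightarrow> real) set \<Rightarrow> bool" where
  "fincodim_subspace p N Y \<longleftrightarrow>
     Y \<subseteq> Xw p \<and> (\<lambda>k s. 0) \<in> Y
   \<and> (\<forall>x\<in>Y. \<forall>y\<in>Y. vadd x y \<in> Y)
   \<and> (\<forall>a. \<forall>x\<in>Y. vscale a x \<in> Y)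
   \<and> (\<forall>u v. (\<forall>n. u n \<in> Y) \<and> v \<in> Xw p \<and> (\<lambda>n. N (vsub (u n) v)) \<longlonglongrightarrow> 0 \<longrightarrow> v \<in> Y)
   \<and> (\<exists>B. finite B \<and> B \<subseteq> Xw p \<and>
        (\<forall>v\<in>Xw p. \<exists>y\<in>Y. \<exists>c. v = (\<lambda>k s. y k s + (\<Sum>b\<in>B. c b * b k s))))"

definition aus_modulus :: "real \<Rightarrow> ((nat \<Rightarrow> nat list \<Rightarrow> real) \<Rightarrow> real) \<Rightarrow> real \<Rightarrow> real" where
  "aus_modulus p N t =
     (SUP x\<in>{x\<in>Xw p. N x = 1}.
        INF Y\<in>{Y. fincodim_subspace p N Y}.
          SUP y\<in>{y\<in>Y. N y = 1}. N (vadd x (vscale t y)) - 1)"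

definition AUS :: "real \<Rightarrow> ((nat \<Rightarrow> nat list \<Rightarrow> real) \<Rightarrow> real) \<Rightarrow> bool" where
  "AUS p N \<longleftrightarrow> ((\<lambda>t. aus_modulus p N t / t) \<longlongrightarrow> 0) (at_right 0)"

end

theory Submission
  imports Defs
begin

text \<open>
  Let \<open>N\<close> be an equivalent norm, \<open>c \<parallel>x\<parallel> \<le> N x \<le> C \<parallel>x\<parallel>\<close>, with \<open>\<rho>(t) < \<epsilon> t\<close> for small
  \<open>t\<close>, where \<open>\<epsilon> = c / (2 C)\<close>. Work in one summand \<open>X\<^sup>1\<^sup>,\<^sup>J\<^sub>p\<close> with tree vectors:
  level \<open>i\<close> (the coordinates of length \<open>i\<close>) carries \<open>T i\<close> times a tensor product
  \<open>a 0 \<otimes> \<dots> \<otimes> a (i - 1)\<close> of \<open>\<ell>\<^sub>p\<close>-unit vectors, so the levels are \<open>\<ell>\<^sub>1\<close>-summed and the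
  norm is \<open>\<Sum>i. \<bar>T i\<bar>\<close>. Since a level offers infinitely many choices for the last factor,
  every finite-codimensional subspace contains a unit vector of the next level. Asymptotic
  smoothness therefore lets us append \<open>J\<close> levels, each of weight at least \<open>\<tau> / C\<close> for a
  fixed small \<open>\<tau>\<close>, at a cost of at most \<open>\<epsilon> \<tau>\<close> in \<open>N\<close> each. The result has norm at least
  \<open>1 + J \<tau> / C\<close> but \<open>N\<close>-value at most \<open>C + J \<epsilon> \<tau>\<close>, which contradicts \<open>c \<parallel>x\<parallel> \<le> N x\<close>
  once \<open>J\<close> is large.
\<close>

section \<open>Minkowski's inequality for sequences\<close>

lemma convex_powr_nonneg:
  fixes p t u v :: real
  assumes p: "1 \<le> p" and "0 \<le> u" "0 \<le> v" "0 \<le> t" "t \<le> 1"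
  shows "(t * u + (1 - t) * v) powr p \<le> t * u powr p + (1 - t) * v powr p"
proof (cases "0 < u \<and> 0 < v")
  case True
  then show ?thesis
    using convex_onD[OF powr_convex[OF p], of "1 - t" u v] assms by (simp add: algebra_simps)
next
  case False
  have scale: "(m * w) powr p \<le> m * w powr p" if "0 \<le> m" "m \<le> 1" "0 \<le> w" for m w :: real
  proof -
    have "m powr p \<le> m"
      using powr_mono'[of 1 p m] p that by simp
    then show ?thesis
      using that by (simp add: powr_mult mult_right_mono)
  qed
  from False consider "u = 0" | "v = 0"
    using assms by linarith
  then show ?thesis
    by cases (use scale[of "1 - t" v] scale[of t u] assms in simp_all)
qed

lemma lp_norm_mono:
  fixes b c :: "nat \<Rightarrow> real"
  assumes p: "0 < p" and c: "\<And>n. 0 \<le> c n" "\<And>n. c n \<le> b n" and b: "summable (\<lambda>n. b n powr p)"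
  shows "summable (\<lambda>n. c n powr p) \<and> (\<Sum>n. c n powr p) powr (1/p) \<le> (\<Sum>n. b n powr p) powr (1/p)"
proof -
  have le: "c n powr p \<le> b n powr p" for n
    using c p by (intro powr_mono2) auto
  have "summable (\<lambda>n. c n powr p)"
    by (rule summable_comparison_test[OF _ b]) (use le in auto)
  moreover from this have "(\<Sum>n. c n powr p) \<le> (\<Sum>n. b n powr p)"
    using b le by (intro suminf_le)
  moreover from calculation have "0 \<le> (\<Sum>n. c n powr p)"
    by (intro suminf_nonneg) auto
  ultimately show ?thesis
    using p by (simp add: powr_mono2)
qed

lemma lp_minkowski_pos:
  fixes a b c :: "nat \<Rightarrow> real"
  assumes p: "1 \<le> p" and a: "\<And>n. 0 \<le> a n" and b: "\<And>n. 0 \<le> b n"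
    and c: "\<And>n. 0 \<le> c n" and cab: "\<And>n. c n \<le> a n + b n"
    and "0 < A" "0 < B" and A: "(\<lambda>n. a n powr p) sums (A powr p)" and B: "(\<lambda>n. b n powr p) sums (B powr p)"
  shows "summable (\<lambda>n. c n powr p) \<and> (\<Sum>n. c n powr p) \<le> (A + B) powr p"
proof -
  \<comment> \<open>Convexity of \<open>x powr p\<close> at the point \<open>(a n + b n)/(A + B)\<close>, a convex combination of
    \<open>a n / A\<close> and \<open>b n / B\<close> with weights \<open>A/(A+B)\<close> and \<open>B/(A+B)\<close>.\<close>
  define t where "t = A / (A + B)"
  have t: "0 \<le> t" "t \<le> 1" "(A + B) * t = A" "(A + B) * (1 - t) = B"
    unfolding t_def using \<open>0 < A\<close> \<open>0 < B\<close> by (auto simp: field_simps)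
  define K where "K = (\<lambda>n. (A + B) powr p * (t * (a n / A) powr p + (1 - t) * (b n / B) powr p))"
  have pt: "c n powr p \<le> K n" for n
  proof -
    have "(A + B) * (t * (a n / A) + (1 - t) * (b n / B))
        = ((A + B) * t) * (a n / A) + ((A + B) * (1 - t)) * (b n / B)"
      by (simp only: distrib_left mult.assoc)
    also have "\<dots> = a n + b n"
      using \<open>0 < A\<close> \<open>0 < B\<close> t by simp
    finally have "c n powr p \<le> (A + B) powr p * (t * (a n / A) + (1 - t) * (b n / B)) powr p"
      using cab[of n] c[of n] p by (simp add: powr_mult[symmetric] powr_mono2)
    also have "\<dots> \<le> K n"
      unfolding K_def using \<open>0 < A\<close> \<open>0 < B\<close> a b t p by (intro mult_left_mono convex_powr_nonneg) auto
    finally show ?thesis .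
  qed
  have "(\<lambda>n. a n powr p / A powr p) sums 1" "(\<lambda>n. b n powr p / B powr p) sums 1"
    using sums_divide[OF A, of "A powr p"] sums_divide[OF B, of "B powr p"] \<open>0 < A\<close> \<open>0 < B\<close>
    by simp_all
  then have "(\<lambda>n. t * (a n / A) powr p + (1 - t) * (b n / B) powr p) sums (t * 1 + (1 - t) * 1)"
    using a b \<open>0 < A\<close> \<open>0 < B\<close> by (intro sums_add sums_mult) (simp_all add: powr_divide)
  then have K: "K sums (A + B) powr p"
    unfolding K_def using sums_mult by fastforce
  have sc: "summable (\<lambda>n. c n powr p)"
    by (rule summable_comparison_test[OF _ sums_summable[OF K]]) (use pt in auto)
  moreover have "(\<Sum>n. c n powr p) \<le> suminf K"
    by (rule suminf_le[OF pt sc sums_summable[OF K]])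
  ultimately show ?thesis
    using K by (simp add: sums_iff)
qed

lemma lp_minkowski:
  fixes a b c :: "nat \<Rightarrow> real"
  assumes p: "1 \<le> p" and a: "\<And>n. 0 \<le> a n" and b: "\<And>n. 0 \<le> b n"
    and c: "\<And>n. 0 \<le> c n" and cab: "\<And>n. c n \<le> a n + b n"
    and sa: "summable (\<lambda>n. a n powr p)" and sb: "summable (\<lambda>n. b n powr p)"
  shows "summable (\<lambda>n. c n powr p) \<and>
    (\<Sum>n. c n powr p) powr (1/p) \<le> (\<Sum>n. a n powr p) powr (1/p) + (\<Sum>n. b n powr p) powr (1/p)"
proof -
  define A where "A = (\<Sum>n. a n powr p) powr (1/p)"
  define B where "B = (\<Sum>n. b n powr p) powr (1/p)"
  have SA: "(\<Sum>n. a n powr p) = A powr p" and SB: "(\<Sum>n. b n powr p) = B powr p"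
    unfolding A_def B_def using p sa sb by (simp_all add: powr_powr suminf_nonneg)
  have "A \<ge> 0" "B \<ge> 0"
    unfolding A_def B_def by simp_all
  then consider "A = 0" | "B = 0" | "0 < A" "0 < B"
    by linarith
  then show ?thesis
  proof cases
    case 1
    then have "a n = 0" for n
      using SA suminf_eq_zero_iff[OF sa] by simp
    then show ?thesis
      using lp_norm_mono[of p c b] p c cab sb 1 unfolding A_def by simp
  next
    case 2
    then have "b n = 0" for n
      using SB suminf_eq_zero_iff[OF sb] by simp
    then show ?thesis
      using lp_norm_mono[of p c a] p c cab sa 2 unfolding B_def by simp
  next
    case 3
    have "(\<lambda>n. a n powr p) sums (A powr p)" "(\<lambda>n. b n powr p) sums (B powr p)"
      using summable_sums[OF sa] summable_sums[OF sb] SA SB by simp_all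
    then have sc: "summable (\<lambda>n. c n powr p)" and "(\<Sum>n. c n powr p) \<le> (A + B) powr p"
      using lp_minkowski_pos[OF p a b c cab 3] by auto
    then have "(\<Sum>n. c n powr p) powr (1/p) \<le> ((A + B) powr p) powr (1/p)"
      using p by (intro powr_mono2) (auto intro: suminf_nonneg)
    also have "\<dots> = A + B"
      using p 3 by (simp add: powr_powr)
    finally show ?thesis
      using sc unfolding A_def B_def by simp
  qed
qed

section \<open>The spaces \<open>X\<^sup>1\<^sup>,\<^sup>k\<^sub>p\<close> and tree vectors\<close>

lemma Xnorm_nonneg: "0 \<le> Xnorm p k f"
  by (cases k) auto

lemma inX_zero: "inX p k (\<lambda>s. 0) \<and> Xnorm p k (\<lambda>s. 0) = 0"
  by (induction k) auto

lemma inX_scale: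
  assumes p: "0 < p" and f: "inX p k f"
  shows "inX p k (\<lambda>s. a * f s) \<and> Xnorm p k (\<lambda>s. a * f s) = \<bar>a\<bar> * Xnorm p k f"
  using f
proof (induction k arbitrary: f)
  case 0
  then show ?case by (simp add: abs_mult)
next
  case (Suc k)
  have IH: "inX p k (\<lambda>s. a * f (n # s)) \<and> Xnorm p k (\<lambda>s. a * f (n # s)) = \<bar>a\<bar> * Xnorm p k (\<lambda>s. f (n # s))" for n
    using Suc by simp
  have sm: "summable (\<lambda>n. Xnorm p k (\<lambda>s. f (n # s)) powr p)"
    using Suc.prems by simp
  have "(\<Sum>n. \<bar>a\<bar> powr p * Xnorm p k (\<lambda>s. f (n # s)) powr p)
      = \<bar>a\<bar> powr p * (\<Sum>n. Xnorm p k (\<lambda>s. f (n # s)) powr p)"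
    by (rule suminf_mult[OF sm])
  moreover have "(\<bar>a\<bar> powr p) powr (1/p) = \<bar>a\<bar>"
    using p by (simp add: powr_powr)
  ultimately show ?case
    using IH sm Suc.prems by (simp add: summable_mult powr_mult abs_mult distrib_left)
qed

lemma inX_add:
  assumes p: "1 \<le> p" and f: "inX p k f" and g: "inX p k g"
  shows "inX p k (\<lambda>s. f s + g s) \<and> Xnorm p k (\<lambda>s. f s + g s) \<le> Xnorm p k f + Xnorm p k g"
  using f g
proof (induction k arbitrary: f g)
  case 0
  then show ?case by simp
next
  case (Suc k)
  have IH: "inX p k (\<lambda>s. f (n # s) + g (n # s)) \<and> Xnorm p k (\<lambda>s. f (n # s) + g (n # s))
      \<le> Xnorm p k (\<lambda>s. f (n # s)) + Xnorm p k (\<lambda>s. g (n # s))" for n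
    using Suc by simp
  have "summable (\<lambda>n. Xnorm p k (\<lambda>s. f (n # s) + g (n # s)) powr p) \<and>
    (\<Sum>n. Xnorm p k (\<lambda>s. f (n # s) + g (n # s)) powr p) powr (1/p) \<le>
    (\<Sum>n. Xnorm p k (\<lambda>s. f (n # s)) powr p) powr (1/p) + (\<Sum>n. Xnorm p k (\<lambda>s. g (n # s)) powr p) powr (1/p)"
    using IH Suc.prems by (intro lp_minkowski[OF p]) (auto simp: Xnorm_nonneg)
  moreover have "\<bar>f [] + g []\<bar> \<le> \<bar>f []\<bar> + \<bar>g []\<bar>"
    by (rule abs_triangle_ineq)
  ultimately show ?case
    using IH by simp
qed

lemma Xw_add:
  assumes p: "1 \<le> p" and x: "x \<in> Xw p" and y: "y \<in> Xw p"
  shows "vadd x y \<in> Xw p"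
proof -
  have k: "inX p k (vadd x y k) \<and> Xnorm p k (vadd x y k) \<le> Xnorm p k (x k) + Xnorm p k (y k)" for k
    using inX_add[OF p, of k "x k" "y k"] x y unfolding Xw_def vadd_def by auto
  then have "summable (\<lambda>k. Xnorm p k (vadd x y k) powr p)"
    using lp_minkowski[OF p, of "\<lambda>k. Xnorm p k (x k)" "\<lambda>k. Xnorm p k (y k)"] x y
    unfolding Xw_def by (auto simp: Xnorm_nonneg)
  with k show ?thesis
    unfolding Xw_def by auto
qed

lemma Xw_scale:
  assumes p: "0 < p" and x: "x \<in> Xw p"
  shows "vscale a x \<in> Xw p"
proof -
  have k: "inX p k (vscale a x k) \<and> Xnorm p k (vscale a x k) = \<bar>a\<bar> * Xnorm p k (x k)" for k
    using inX_scale[OF p, of k "x k" a] x unfolding Xw_def vscale_def by auto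
  have "summable (\<lambda>k. \<bar>a\<bar> powr p * Xnorm p k (x k) powr p)"
    using x unfolding Xw_def by (auto intro: summable_mult)
  with k show ?thesis
    unfolding Xw_def by (simp add: powr_mult)
qed

definition emb :: "nat \<Rightarrow> (nat list \<Rightarrow> real) \<Rightarrow> nat \<Rightarrow> nat list \<Rightarrow> real" where
  "emb K f = (\<lambda>k. if k = K then f else (\<lambda>s. 0))"

lemma emb_scale: "emb K (\<lambda>s. a * f s) = vscale a (emb K f)"
  unfolding emb_def vscale_def by auto

lemma Xw_emb:
  assumes p: "0 < p" and f: "inX p K f"
  shows "emb K f \<in> Xw p \<and> Xwnorm p (emb K f) = Xnorm p K f"
proof -
  have "(\<lambda>k. Xnorm p k (emb K f k) powr p) = (\<lambda>k. if k = K then Xnorm p k f powr p else 0)"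
    unfolding emb_def using inX_zero by (auto intro!: ext)
  then have "(\<lambda>k. Xnorm p k (emb K f k) powr p) sums (Xnorm p K f powr p)"
    using sums_single by metis
  moreover have "inX p k (emb K f k)" for k
    unfolding emb_def using f inX_zero by auto
  moreover have "(Xnorm p K f powr p) powr (1/p) = Xnorm p K f"
    using p Xnorm_nonneg[of p K f] by (simp add: powr_powr)
  ultimately show ?thesis
    unfolding Xw_def Xwnorm_def by (auto simp: sums_iff)
qed

definition lp_unit :: "real \<Rightarrow> (nat \<Rightarrow> real) \<Rightarrow> bool" where
  "lp_unit p b \<longleftrightarrow> summable (\<lambda>n. \<bar>b n\<bar> powr p) \<and> (\<Sum>n. \<bar>b n\<bar> powr p) = 1"

lemma lp_unit_basis: "lp_unit p (\<lambda>n. of_bool (n = m))"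
proof -
  have "(\<lambda>n. \<bar>of_bool (n = m)\<bar> powr p) = (\<lambda>n. if n = m then (\<lambda>_. 1::real) n else 0)"
    by auto
  then show ?thesis
    using sums_single[of m "\<lambda>_. 1::real"] unfolding lp_unit_def by (simp add: sums_iff)
qed

lemma lp_unit_normalize:
  assumes p: "0 < p" and b: "summable (\<lambda>n. \<bar>b n\<bar> powr p)" and "b m \<noteq> 0"
  obtains r where "0 < r" "lp_unit p (\<lambda>n. b n / r)"
proof
  define S where "S = (\<Sum>n. \<bar>b n\<bar> powr p)"
  have "0 < S"
    unfolding S_def using b \<open>b m \<noteq> 0\<close> by (intro suminf_pos2[of _ m]) auto
  then show "0 < S powr (1/p)"
    by simp
  have "(\<lambda>n. \<bar>b n / S powr (1/p)\<bar> powr p) = (\<lambda>n. \<bar>b n\<bar> powr p / S)"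
    using p \<open>0 < S\<close> by (simp add: powr_divide powr_powr)
  then show "lp_unit p (\<lambda>n. b n / S powr (1/p))"
    using b \<open>0 < S\<close> unfolding lp_unit_def S_def by (simp add: suminf_divide summable_divide)
qed

definition tree_vec :: "(nat \<Rightarrow> real) \<Rightarrow> (nat \<Rightarrow> nat \<Rightarrow> real) \<Rightarrow> nat list \<Rightarrow> real" where
  "tree_vec T a s = T (length s) * (\<Prod>l<length s. a l (s ! l))"

definition level_vec :: "nat \<Rightarrow> (nat \<Rightarrow> nat \<Rightarrow> real) \<Rightarrow> nat list \<Rightarrow> real" where
  "level_vec j = tree_vec (\<lambda>i. of_bool (i = j))"

lemma tree_vec_Cons: "tree_vec T a (n # s) = a 0 n * tree_vec (\<lambda>i. T (Suc i)) (\<lambda>l. a (Suc l)) s"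
  unfolding tree_vec_def by (simp add: prod.lessThan_Suc_shift del: prod.lessThan_Suc)

lemma Xnorm_tree_vec:
  assumes p: "0 < p" and T: "\<forall>i>k. T i = 0" and a: "\<forall>l. lp_unit p (a l)"
  shows "inX p k (tree_vec T a) \<and> Xnorm p k (tree_vec T a) = (\<Sum>i\<le>k. \<bar>T i\<bar>)"
  using T a
proof (induction k arbitrary: T a)
  case 0
  then show ?case by (auto simp: tree_vec_def neq_Nil_conv)
next
  case (Suc k)
  define T' where "T' = (\<lambda>i. T (Suc i))"
  define a' where "a' = (\<lambda>l. a (Suc l))"
  define X where "X = Xnorm p k (tree_vec T' a')"
  have IH: "inX p k (tree_vec T' a')" "X = (\<Sum>i\<le>k. \<bar>T' i\<bar>)"
    using Suc unfolding T'_def a'_def X_def by auto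
  have sub: "inX p k (\<lambda>s. tree_vec T a (n # s)) \<and> Xnorm p k (\<lambda>s. tree_vec T a (n # s)) = \<bar>a 0 n\<bar> * X" for n
    unfolding tree_vec_Cons T'_def[symmetric] a'_def[symmetric] X_def
    using inX_scale[OF p IH(1)] by simp
  have a0: "(\<lambda>n. \<bar>a 0 n\<bar> powr p) sums 1"
    using Suc.prems unfolding lp_unit_def by (simp add: sums_iff)
  have "(\<lambda>n. Xnorm p k (\<lambda>s. tree_vec T a (n # s)) powr p) sums (X powr p)"
    using sums_mult[OF a0, of "X powr p"] sub by (simp add: powr_mult mult.commute)
  moreover have "(X powr p) powr (1/p) = X"
    using p Xnorm_nonneg[of p k] unfolding X_def by (simp add: powr_powr)
  moreover have "(\<Sum>i\<le>Suc k. \<bar>T i\<bar>) = \<bar>T 0\<bar> + X"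
    unfolding IH(2) T'_def by (simp add: sum.atMost_Suc_shift del: sum.atMost_Suc)
  ultimately show ?case
    using sub by (simp add: sums_iff tree_vec_def)
qed

lemma Xw_emb_tree_vec:
  assumes "0 < p" "\<forall>i>K. T i = 0" "\<forall>l. lp_unit p (a l)"
  shows "emb K (tree_vec T a) \<in> Xw p \<and> Xwnorm p (emb K (tree_vec T a)) = (\<Sum>i\<le>K. \<bar>T i\<bar>)"
  using Xnorm_tree_vec[OF assms] Xw_emb[OF assms(1)] by simp

lemma Xw_emb_level_vec:
  assumes "0 < p" "j \<le> K" "\<forall>l. lp_unit p (a l)"
  shows "emb K (level_vec j a) \<in> Xw p \<and> Xwnorm p (emb K (level_vec j a)) = 1"
proof -
  have "(\<Sum>i\<le>K. \<bar>of_bool (i = j) :: real\<bar>) = 1"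
    using assms(2) by (simp add: sum.delta)
  then show ?thesis
    unfolding level_vec_def using Xw_emb_tree_vec[of p K _ a] assms by simp
qed

lemma level_vec_Suc_upd:
  "level_vec (Suc j) (a(j := b)) s =
     (if length s = Suc j then (\<Prod>l<j. a l (s ! l)) * b (s ! j) else 0)"
  unfolding level_vec_def tree_vec_def by (auto intro!: prod.cong)

lemma level_vec_upd_lincomb:
  "level_vec (Suc j) (a(j := (\<lambda>n. \<Sum>m\<in>I. w m * f m n)))
     = (\<lambda>s. \<Sum>m\<in>I. w m * level_vec (Suc j) (a(j := f m)) s)"
  unfolding level_vec_Suc_upd by (intro ext) (auto simp: sum_distrib_left mult.left_commute)

lemma level_vec_upd_scale:
  "level_vec (Suc j) (a(j := (\<lambda>n. b n / r))) = (\<lambda>s. (1 / r) * level_vec (Suc j) (a(j := b)) s)"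
  unfolding level_vec_Suc_upd by auto

lemma tree_vec_extend:
  assumes "\<forall>i>j. T i = 0"
  shows "tree_vec (T(Suc j := \<theta>)) (a(j := b)) s = tree_vec T a s + \<theta> * level_vec (Suc j) (a(j := b)) s"
proof -
  have "tree_vec T (a(j := b)) s = tree_vec T a s"
    using assms unfolding tree_vec_def by (cases "j < length s") (auto intro!: prod.cong)
  then show ?thesis
    using assms unfolding level_vec_def tree_vec_def by auto
qed

section \<open>Finite-codimensional subspaces\<close>

lemma homogeneous_system_nontrivial_solution:
  fixes c :: "'b \<Rightarrow> 'i \<Rightarrow> real"
  assumes "finite B" "finite I" "card B < card I"
  shows "\<exists>w. (\<exists>i\<in>I. w i \<noteq> 0) \<and> (\<forall>\<beta>\<in>B. (\<Sum>i\<in>I. w i * c \<beta> i) = 0)"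
  using assms
proof (induction B arbitrary: I c rule: finite_induct)
  case empty
  then have "I \<noteq> {}"
    by auto
  then show ?case
    by (intro exI[of _ "\<lambda>_. 1"]) auto
next
  case (insert \<beta> B)
  show ?case
  proof (cases "\<forall>i\<in>I. c \<beta> i = 0")
    case True
    then show ?thesis
      using insert.IH[of I c] insert.prems insert.hyps by auto
  next
    case False
    \<comment> \<open>Gaussian elimination of the unknown \<open>w i\<^sub>0\<close> using the equation of \<open>\<beta>\<close>.\<close>
    then obtain i0 where i0: "i0 \<in> I" "c \<beta> i0 \<noteq> 0"
      by auto
    define I' where "I' = I - {i0}"
    define c' where "c' = (\<lambda>\<gamma> i. c \<gamma> i - c \<gamma> i0 * c \<beta> i / c \<beta> i0)"
    have "finite I'" "card B < card I'"
      using insert i0 unfolding I'_def by auto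
    from insert.IH[OF this, of c'] obtain w' where
      w': "\<exists>i\<in>I'. w' i \<noteq> 0" "\<forall>\<gamma>\<in>B. (\<Sum>i\<in>I'. w' i * c' \<gamma> i) = 0"
      by auto
    define w where "w = (\<lambda>i. if i = i0 then - (\<Sum>j\<in>I'. w' j * c \<beta> j) / c \<beta> i0 else w' i)"
    have split: "(\<Sum>i\<in>I. w i * c \<gamma> i) = w i0 * c \<gamma> i0 + (\<Sum>i\<in>I'. w' i * c \<gamma> i)" for \<gamma>
    proof -
      have "(\<Sum>i\<in>I. w i * c \<gamma> i) = w i0 * c \<gamma> i0 + (\<Sum>i\<in>I'. w i * c \<gamma> i)"
        unfolding I'_def using i0 insert.prems by (simp add: sum.remove)
      also have "(\<Sum>i\<in>I'. w i * c \<gamma> i) = (\<Sum>i\<in>I'. w' i * c \<gamma> i)"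
        unfolding I'_def w_def by (rule sum.cong) auto
      finally show ?thesis .
    qed
    have "(\<Sum>i\<in>I. w i * c \<gamma> i) = 0" if "\<gamma> \<in> B" for \<gamma>
    proof -
      have "(\<Sum>i\<in>I'. w' i * c' \<gamma> i)
          = (\<Sum>i\<in>I'. w' i * c \<gamma> i) - c \<gamma> i0 / c \<beta> i0 * (\<Sum>i\<in>I'. w' i * c \<beta> i)"
        unfolding c'_def by (simp add: sum_subtractf sum_distrib_left algebra_simps)
      then show ?thesis
        unfolding split using w'(2) that i0 by (simp add: w_def algebra_simps)
    qed
    moreover have "(\<Sum>i\<in>I. w i * c \<beta> i) = 0"
      unfolding split using i0 by (simp add: w_def)
    moreover have "\<exists>i\<in>I. w i \<noteq> 0"
      using w'(1) unfolding w_def I'_def by auto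
    ultimately show ?thesis
      by auto
  qed
qed

lemma fincodim_subspaceD:
  assumes "fincodim_subspace p N Y"
  shows "Y \<subseteq> Xw p" "(\<lambda>k s. 0) \<in> Y" "x \<in> Y \<Longrightarrow> y \<in> Y \<Longrightarrow> vadd x y \<in> Y"
    "x \<in> Y \<Longrightarrow> vscale a x \<in> Y"
  using assms unfolding fincodim_subspace_def by blast+

lemma Xw_fincodim_subspace:
  assumes p: "1 \<le> p"
  shows "fincodim_subspace p N (Xw p)"
proof -
  have "(\<lambda>k s. 0) \<in> Xw p"
    unfolding Xw_def using inX_zero by simp
  then show ?thesis
    unfolding fincodim_subspace_def using Xw_add[OF p] Xw_scale[of p] p
    by (auto intro!: exI[of _ "{}"])
qed

lemma fincodim_subspace_lincomb:
  assumes Y: "fincodim_subspace p N Y" and "finite I" and y: "\<forall>m\<in>I. y m \<in> Y"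
  shows "(\<lambda>k s. \<Sum>m\<in>I. w m * y m k s) \<in> Y"
  using \<open>finite I\<close> y
proof (induction I rule: finite_induct)
  case empty
  then show ?case
    using fincodim_subspaceD(2)[OF Y] by simp
next
  case (insert i I)
  then have "vadd (vscale (w i) (y i)) (\<lambda>k s. \<Sum>m\<in>I. w m * y m k s) \<in> Y"
    using fincodim_subspaceD(3,4)[OF Y] by simp
  moreover have "vadd (vscale (w i) (y i)) (\<lambda>k s. \<Sum>m\<in>I. w m * y m k s)
      = (\<lambda>k s. \<Sum>m\<in>insert i I. w m * y m k s)"
    unfolding vadd_def vscale_def using insert.hyps by simp
  ultimately show ?case
    by simp
qed

lemma fincodim_subspace_nontrivial_combination:
  fixes G :: "nat \<Rightarrow> nat \<Rightarrow> nat list \<Rightarrow> real"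
  assumes Y: "fincodim_subspace p N Y" and G: "\<And>m. G m \<in> Xw p"
  shows "\<exists>M w. (\<exists>m\<le>M. w m \<noteq> 0) \<and> (\<lambda>k s. \<Sum>m\<le>M. w m * G m k s) \<in> Y"
proof -
  obtain B where B: "finite B"
    and dec: "\<forall>v\<in>Xw p. \<exists>y\<in>Y. \<exists>c. v = (\<lambda>k s. y k s + (\<Sum>b\<in>B. c b * b k s))"
    using Y unfolding fincodim_subspace_def by blast
  have "\<forall>m. \<exists>y c. y \<in> Y \<and> G m = (\<lambda>k s. y k s + (\<Sum>b\<in>B. c b * b k s))"
    using dec G by blast
  then obtain y where y: "\<And>m. y m \<in> Y"
    and "\<forall>m. \<exists>c. G m = (\<lambda>k s. y m k s + (\<Sum>b\<in>B. c b * b k s))"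
    unfolding choice_iff by blast
  then obtain cc where Gdec: "\<And>m. G m = (\<lambda>k s. y m k s + (\<Sum>b\<in>B. cc m b * b k s))"
    unfolding choice_iff by blast
  \<comment> \<open>More than \<open>card B\<close> vectors: some combination kills all components along \<open>B\<close>.\<close>
  obtain w where w: "\<exists>m\<le>card B. w m \<noteq> 0" "\<forall>b\<in>B. (\<Sum>m\<le>card B. w m * cc m b) = 0"
    using homogeneous_system_nontrivial_solution[OF B, of "{..card B}" "\<lambda>b m. cc m b"] by auto
  have "(\<Sum>m\<le>card B. w m * G m k s) = (\<Sum>m\<le>card B. w m * y m k s)" for k s
  proof -
    have "(\<Sum>m\<le>card B. w m * (\<Sum>b\<in>B. cc m b * b k s)) = (\<Sum>b\<in>B. (\<Sum>m\<le>card B. w m * cc m b) * b k s)"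
      by (simp add: sum_distrib_left sum_distrib_right mult.assoc) (rule sum.swap)
    then show ?thesis
      unfolding Gdec using w(2) by (simp add: distrib_left sum.distrib)
  qed
  then have "(\<lambda>k s. \<Sum>m\<le>card B. w m * G m k s) \<in> Y"
    using fincodim_subspace_lincomb[OF Y, of "{..card B}" y w] y by simp
  with w(1) show ?thesis
    by blast
qed

lemma fincodim_subspace_level_vec:
  assumes p: "0 < p" and Y: "fincodim_subspace p N Y" and "j < K" and a: "\<forall>l. lp_unit p (a l)"
  shows "\<exists>b. lp_unit p b \<and> emb K (level_vec (Suc j) (a(j := b))) \<in> Y"
proof -
  define e :: "nat \<Rightarrow> nat \<Rightarrow> real" where "e = (\<lambda>m n. of_bool (n = m))"
  define G where "G m = emb K (level_vec (Suc j) (a(j := e m)))" for m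
  have "G m \<in> Xw p" for m
    using Xw_emb_level_vec[OF p, of "Suc j" K "a(j := e m)"] \<open>j < K\<close> a lp_unit_basis
    unfolding G_def e_def by auto
  then obtain M w where w: "\<exists>m\<le>M. w m \<noteq> 0" and comb: "(\<lambda>k s. \<Sum>m\<le>M. w m * G m k s) \<in> Y"
    using fincodim_subspace_nontrivial_combination[OF Y] by blast
  define b where "b = (\<lambda>n. \<Sum>m\<le>M. w m * e m n)"
  have b_eq: "b n = (if n \<le> M then w n else 0)" for n
    unfolding b_def e_def by (simp add: if_distrib cong: if_cong)
  have "(\<lambda>k s. \<Sum>m\<le>M. w m * G m k s) = emb K (level_vec (Suc j) (a(j := b)))"
    unfolding G_def b_def level_vec_upd_lincomb emb_def by auto
  with comb have inY: "emb K (level_vec (Suc j) (a(j := b))) \<in> Y"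
    by simp
  obtain m where "b m \<noteq> 0"
    using w b_eq by metis
  moreover have "summable (\<lambda>n. \<bar>b n\<bar> powr p)"
    by (rule summable_finite[of "{..M}"]) (auto simp: b_eq)
  ultimately obtain r where r: "lp_unit p (\<lambda>n. b n / r)"
    using lp_unit_normalize[OF p] by metis
  have "emb K (level_vec (Suc j) (a(j := (\<lambda>n. b n / r)))) \<in> Y"
    unfolding level_vec_upd_scale emb_scale using fincodim_subspaceD(4)[OF Y inY] .
  with r show ?thesis
    by blast
qed

section \<open>Equivalent asymptotically uniformly smooth norms\<close>

lemma equiv_normD:
  assumes "equiv_norm p N" and "x \<in> Xw p"
  shows "y \<in> Xw p \<Longrightarrow> N (vadd x y) \<le> N x + N y" and "N (vscale a x) = \<bar>a\<bar> * N x"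
  using assms unfolding equiv_norm_def by blast+

lemma equiv_norm_bounds:
  assumes "equiv_norm p N"
  obtains c C where "0 < c" "0 < C" "\<forall>x\<in>Xw p. c * Xwnorm p x \<le> N x \<and> N x \<le> C * Xwnorm p x"
  using assms unfolding equiv_norm_def by blast

lemma equiv_norm_nonneg:
  assumes "equiv_norm p N" and "x \<in> Xw p"
  shows "0 \<le> N x"
proof -
  obtain c C where "0 < c" "\<forall>x\<in>Xw p. c * Xwnorm p x \<le> N x \<and> N x \<le> C * Xwnorm p x"
    using equiv_norm_bounds[OF assms(1)] by blast
  then have "0 < c" "c * Xwnorm p x \<le> N x"
    using assms(2) by auto
  moreover have "0 \<le> Xwnorm p x"
    unfolding Xwnorm_def by simp
  ultimately show ?thesis
    by (meson order_trans zero_le_mult_iff less_imp_le)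
qed

lemma fincodim_subspace_normalized_level_vec:
  assumes p: "0 < p" and E: "equiv_norm p N" and "0 < c"
    and bounds: "\<forall>x\<in>Xw p. c * Xwnorm p x \<le> N x \<and> N x \<le> C * Xwnorm p x"
    and Y: "fincodim_subspace p N Y" and "j < J" and a: "\<forall>l. lp_unit p (a l)"
  obtains b \<mu> where "lp_unit p b" "c \<le> \<mu>" "\<mu> \<le> C"
    "vscale (1 / \<mu>) (emb J (level_vec (Suc j) (a(j := b)))) \<in> Y"
    "N (vscale (1 / \<mu>) (emb J (level_vec (Suc j) (a(j := b))))) = 1"
proof -
  obtain b where b: "lp_unit p b" and vY: "emb J (level_vec (Suc j) (a(j := b))) \<in> Y"
    using fincodim_subspace_level_vec[OF p Y \<open>j < J\<close> a] by blast
  define v where "v = emb J (level_vec (Suc j) (a(j := b)))"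
  have "v \<in> Xw p" "Xwnorm p v = 1"
    unfolding v_def using Xw_emb_level_vec[OF p, of "Suc j" J "a(j := b)"] \<open>j < J\<close> a b by auto
  then have "c \<le> N v" "N v \<le> C"
    using bounds by force+
  moreover from calculation have "N (vscale (1 / N v) v) = 1"
    using equiv_normD(2)[OF E \<open>v \<in> Xw p\<close>] \<open>0 < c\<close> by simp
  moreover have "vscale (1 / N v) v \<in> Y"
    unfolding v_def using fincodim_subspaceD(4)[OF Y vY] .
  ultimately show ?thesis
    using that b unfolding v_def by blast
qed

lemma fincodim_subspace_unit_vector:
  assumes p: "0 < p" and E: "equiv_norm p N" and Y: "fincodim_subspace p N Y"
  shows "\<exists>y\<in>Y. N y = 1"
proof -
  obtain c C where c: "0 < c" and bounds: "\<forall>x\<in>Xw p. c * Xwnorm p x \<le> N x \<and> N x \<le> C * Xwnorm p x"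
    using equiv_norm_bounds[OF E] by blast
  define a :: "nat \<Rightarrow> nat \<Rightarrow> real" where "a = (\<lambda>l n. of_bool (n = 0))"
  have a: "\<forall>l. lp_unit p (a l)"
    unfolding a_def using lp_unit_basis by blast
  obtain b \<mu> where "lp_unit p b" "c \<le> \<mu>" "\<mu> \<le> C"
    and "vscale (1 / \<mu>) (emb 1 (level_vec (Suc 0) (a(0 := b)))) \<in> Y"
    and "N (vscale (1 / \<mu>) (emb 1 (level_vec (Suc 0) (a(0 := b))))) = 1"
    by (rule fincodim_subspace_normalized_level_vec[OF p E c bounds Y zero_less_one a])
  then show ?thesis
    by blast
qed

definition aus_sup :: "real \<Rightarrow> ((nat \<Rightarrow> nat list \<Rightarrow> real) \<Rightarrow> real) \<Rightarrow> real
    \<Rightarrow> (nat \<Rightarrow> nat list \<Rightarrow> real) \<Rightarrow> (nat \<Rightarrow> nat list \<Rightarrow> real) set \<Rightarrow> real" where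
  "aus_sup p N t x Y = (SUP y\<in>{y\<in>Y. N y = 1}. N (vadd x (vscale t y)) - 1)"

lemma aus_sup_bounds:
  assumes p: "1 < p" and E: "equiv_norm p N" and x: "x \<in> Xw p" "N x = 1" and t: "0 \<le> t"
    and Y: "fincodim_subspace p N Y"
  shows "\<forall>y\<in>Y. N y = 1 \<longrightarrow> N (vadd x (vscale t y)) - 1 \<le> aus_sup p N t x Y"
    and "-1 \<le> aus_sup p N t x Y" and "aus_sup p N t x Y \<le> t"
proof -
  have YX: "y \<in> Xw p" "vscale t y \<in> Xw p" if "y \<in> Y" for y
    using fincodim_subspaceD(1)[OF Y] Xw_scale[of p y t] p that by auto
  have up: "N (vadd x (vscale t y)) - 1 \<le> t" if "y \<in> Y" "N y = 1" for y
    using equiv_normD(1)[OF E x(1) YX(2)[OF that(1)]] equiv_normD(2)[OF E YX(1)[OF that(1)]] x(2) t that(2)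
    by simp
  have lo: "-1 \<le> N (vadd x (vscale t y)) - 1" if "y \<in> Y" for y
    using equiv_norm_nonneg[OF E Xw_add[OF _ x(1) YX(2)[OF that]]] p by simp
  have bdd: "bdd_above ((\<lambda>y. N (vadd x (vscale t y)) - 1) ` {y\<in>Y. N y = 1})"
    using up by (intro bdd_aboveI[of _ t]) auto
  then show le: "\<forall>y\<in>Y. N y = 1 \<longrightarrow> N (vadd x (vscale t y)) - 1 \<le> aus_sup p N t x Y"
    unfolding aus_sup_def by (auto intro: cSUP_upper)
  \<comment> \<open>Without a unit vector in \<open>Y\<close> the supremum would be the unspecified real \<open>Sup {}\<close>.\<close>
  obtain y0 where "y0 \<in> Y" "N y0 = 1"
    using fincodim_subspace_unit_vector[OF _ E Y] p by auto
  then show "-1 \<le> aus_sup p N t x Y"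
    using le lo by force
  from \<open>y0 \<in> Y\<close> \<open>N y0 = 1\<close> show "aus_sup p N t x Y \<le> t"
    unfolding aus_sup_def using up by (intro cSUP_least) auto
qed

lemma aus_modulus_less_imp_subspace:
  assumes p: "1 < p" and E: "equiv_norm p N" and x: "x \<in> Xw p" "N x = 1" and t: "0 \<le> t"
    and r: "aus_modulus p N t < r"
  obtains Y where "fincodim_subspace p N Y" "\<forall>y\<in>Y. N y = 1 \<longrightarrow> N (vadd x (vscale t y)) - 1 < r"
proof -
  define F where "F = {Y. fincodim_subspace p N Y}"
  define h where "h x' = (INF Y\<in>F. aus_sup p N t x' Y)" for x'
  have XF: "Xw p \<in> F"
    unfolding F_def using Xw_fincodim_subspace p by simp
  have h: "bdd_below (aus_sup p N t x' ` F) \<and> h x' \<le> t"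
    if "x' \<in> Xw p" "N x' = 1" for x'
  proof
    show bdd: "bdd_below (aus_sup p N t x' ` F)"
      unfolding F_def using aus_sup_bounds(2)[OF p E that t] by (intro bdd_belowI[of _ "-1"]) auto
    have "h x' \<le> aus_sup p N t x' (Xw p)"
      unfolding h_def using bdd XF by (rule cINF_lower)
    also have "\<dots> \<le> t"
      using aus_sup_bounds(3)[OF p E that t] XF unfolding F_def by simp
    finally show "h x' \<le> t" .
  qed
  have "aus_modulus p N t = (SUP x'\<in>{x\<in>Xw p. N x = 1}. h x')"
    unfolding aus_modulus_def h_def F_def aus_sup_def ..
  then have "h x \<le> aus_modulus p N t"
    using x h by (auto intro!: cSUP_upper bdd_aboveI[of _ t])
  then have "h x < r"
    using r by simp
  then obtain Y where "Y \<in> F" "aus_sup p N t x Y < r"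
    unfolding h_def using cINF_less_iff[of F "aus_sup p N t x" r] XF h[OF x] by auto
  then show ?thesis
    using that aus_sup_bounds(1)[OF p E x t] unfolding F_def by force
qed

lemma aus_modulus_less_imp_subspace_scaled:
  assumes p: "1 < p" and E: "equiv_norm p N" and z: "z \<in> Xw p" "0 < N z" and "0 < \<tau>"
    and small: "aus_modulus p N (\<tau> / N z) < \<epsilon> * (\<tau> / N z)"
  obtains Y where "fincodim_subspace p N Y"
    "\<forall>y\<in>Y. N y = 1 \<longrightarrow> N (vadd z (vscale \<tau> y)) < N z + \<epsilon> * \<tau>"
proof -
  define x where "x = vscale (1 / N z) z"
  have x: "x \<in> Xw p" "N x = 1"
    unfolding x_def using Xw_scale[of p z] equiv_normD(2)[OF E z(1)] p z by auto
  obtain Y where Y: "fincodim_subspace p N Y"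
    and less: "\<forall>y\<in>Y. N y = 1 \<longrightarrow> N (vadd x (vscale (\<tau> / N z) y)) - 1 < \<epsilon> * (\<tau> / N z)"
    using aus_modulus_less_imp_subspace[OF p E x _ small] \<open>0 < \<tau>\<close> z(2) by auto
  have "N (vadd z (vscale \<tau> y)) < N z + \<epsilon> * \<tau>" if "y \<in> Y" "N y = 1" for y
  proof -
    have "vadd z (vscale \<tau> y) = vscale (N z) (vadd x (vscale (\<tau> / N z) y))"
      unfolding x_def vadd_def vscale_def using z(2) by (simp add: distrib_left)
    moreover have "vadd x (vscale (\<tau> / N z) y) \<in> Xw p"
      using Xw_add[OF _ x(1) Xw_scale] fincodim_subspaceD(1)[OF Y] that p by auto
    ultimately have "N (vadd z (vscale \<tau> y)) = N z * N (vadd x (vscale (\<tau> / N z) y))"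
      using equiv_normD(2)[OF E] z(2) by simp
    also have "\<dots> < N z * (1 + \<epsilon> * (\<tau> / N z))"
      using less that z(2) by (intro mult_strict_left_mono) auto
    also have "\<dots> = N z + \<epsilon> * \<tau>"
      using z(2) by (simp add: field_simps)
    finally show ?thesis .
  qed
  with Y that show ?thesis
    by blast
qed

lemma tree_vec_extension_step:
  assumes p: "1 < p" and E: "equiv_norm p N" and "0 < c"
    and bounds: "\<forall>x\<in>Xw p. c * Xwnorm p x \<le> N x \<and> N x \<le> C * Xwnorm p x"
    and "j < J" and T: "\<forall>i>j. T i = 0" and a: "\<forall>l. lp_unit p (a l)"
    and norm: "1 \<le> Xwnorm p (emb J (tree_vec T a))"
    and "0 < \<tau>" and small: "\<forall>t. 0 < t \<and> t \<le> \<tau> / c \<longrightarrow> aus_modulus p N t < \<epsilon> * t"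
  obtains \<theta> b where "\<tau> / C \<le> \<theta>" "lp_unit p b"
    "N (emb J (tree_vec (T(Suc j := \<theta>)) (a(j := b)))) < N (emb J (tree_vec T a)) + \<epsilon> * \<tau>"
proof -
  define z where "z = emb J (tree_vec T a)"
  have "z \<in> Xw p"
    unfolding z_def using Xw_emb_tree_vec[of p J T a] p T a \<open>j < J\<close> by auto
  have "c * 1 \<le> c * Xwnorm p z"
    using norm \<open>0 < c\<close> unfolding z_def by (intro mult_left_mono) auto
  then have "c \<le> N z"
    using bounds \<open>z \<in> Xw p\<close> by fastforce
  then have "0 < N z" "0 < \<tau> / N z" "\<tau> / N z \<le> \<tau> / c"
    using \<open>0 < c\<close> \<open>0 < \<tau>\<close> by (auto intro: divide_left_mono)
  then have "aus_modulus p N (\<tau> / N z) < \<epsilon> * (\<tau> / N z)"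
    using small by blast
  then obtain Y where Y: "fincodim_subspace p N Y"
    and less: "\<forall>y\<in>Y. N y = 1 \<longrightarrow> N (vadd z (vscale \<tau> y)) < N z + \<epsilon> * \<tau>"
    using aus_modulus_less_imp_subspace_scaled[OF p E \<open>z \<in> Xw p\<close> \<open>0 < N z\<close> \<open>0 < \<tau>\<close>] by blast
  obtain b \<mu> where b: "lp_unit p b" and \<mu>: "c \<le> \<mu>" "\<mu> \<le> C"
    and yY: "vscale (1 / \<mu>) (emb J (level_vec (Suc j) (a(j := b)))) \<in> Y"
    and yN: "N (vscale (1 / \<mu>) (emb J (level_vec (Suc j) (a(j := b))))) = 1"
    using fincodim_subspace_normalized_level_vec[OF _ E \<open>0 < c\<close> bounds Y \<open>j < J\<close> a] p by auto
  have "emb J (tree_vec (T(Suc j := \<tau> / \<mu>)) (a(j := b)))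
      = vadd z (vscale \<tau> (vscale (1 / \<mu>) (emb J (level_vec (Suc j) (a(j := b))))))"
  proof (intro ext)
    fix k s
    show "emb J (tree_vec (T(Suc j := \<tau> / \<mu>)) (a(j := b))) k s
        = vadd z (vscale \<tau> (vscale (1 / \<mu>) (emb J (level_vec (Suc j) (a(j := b)))))) k s"
      unfolding z_def emb_def vadd_def vscale_def tree_vec_extend[OF T]
      by (cases "k = J") simp_all
  qed
  then have "N (emb J (tree_vec (T(Suc j := \<tau> / \<mu>)) (a(j := b)))) < N z + \<epsilon> * \<tau>"
    using less yY yN by simp
  moreover have "\<tau> / C \<le> \<tau> / \<mu>"
    using \<mu> \<open>0 < c\<close> \<open>0 < \<tau>\<close> by (intro divide_left_mono) auto
  ultimately show ?thesis
    using that b unfolding z_def by blast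
qed

lemma Xwnorm_tree_vec_extend:
  assumes p: "0 < p" and "j < J" and T: "\<forall>i>j. T i = 0" and "0 \<le> \<theta>"
    and a: "\<forall>l. lp_unit p (a l)" and b: "lp_unit p b"
  shows "Xwnorm p (emb J (tree_vec (T(Suc j := \<theta>)) (a(j := b)))) = Xwnorm p (emb J (tree_vec T a)) + \<theta>"
proof -
  have "(\<Sum>i\<le>J. \<bar>(T(Suc j := \<theta>)) i\<bar>) = (\<Sum>i\<le>J. \<bar>T i\<bar> + of_bool (i = Suc j) * \<theta>)"
    using T \<open>0 \<le> \<theta>\<close> by (intro sum.cong) auto
  also have "\<dots> = (\<Sum>i\<le>J. \<bar>T i\<bar>) + \<theta>"
    using \<open>j < J\<close> by (simp add: sum.distrib)
  finally show ?thesis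
    using Xw_emb_tree_vec[OF p, of J "T(Suc j := \<theta>)" "a(j := b)"] Xw_emb_tree_vec[OF p, of J T a]
      T a b \<open>j < J\<close> by auto
qed

lemma equiv_aus_norm_tree_vec_construction:
  assumes p: "1 < p" and E: "equiv_norm p N" and "0 < c" "0 < C"
    and bounds: "\<forall>x\<in>Xw p. c * Xwnorm p x \<le> N x \<and> N x \<le> C * Xwnorm p x"
    and "0 < \<tau>" and small: "\<forall>t. 0 < t \<and> t \<le> \<tau> / c \<longrightarrow> aus_modulus p N t < \<epsilon> * t"
    and "j \<le> J"
  shows "\<exists>T a. (\<forall>l. lp_unit p (a l)) \<and> (\<forall>i>j. T i = 0)
    \<and> 1 + real j * \<tau> / C \<le> Xwnorm p (emb J (tree_vec T a))
    \<and> N (emb J (tree_vec T a)) \<le> C + real j * \<epsilon> * \<tau>"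
  using \<open>j \<le> J\<close>
proof (induction j)
  case 0
  define a :: "nat \<Rightarrow> nat \<Rightarrow> real" where "a = (\<lambda>l n. of_bool (n = 0))"
  have a: "\<forall>l. lp_unit p (a l)"
    unfolding a_def using lp_unit_basis by blast
  then have "emb J (level_vec 0 a) \<in> Xw p" "Xwnorm p (emb J (level_vec 0 a)) = 1"
    using Xw_emb_level_vec[of p 0 J a] p by simp_all
  then have "N (emb J (level_vec 0 a)) \<le> C"
    using bounds by force
  with a \<open>Xwnorm p (emb J (level_vec 0 a)) = 1\<close> show ?case
    unfolding level_vec_def by (intro exI[of _ "\<lambda>i. of_bool (i = 0)"] exI[of _ a]) simp
next
  case (Suc j)
  then have "j < J"
    by simp
  from Suc obtain T a where a: "\<forall>l. lp_unit p (a l)" and T: "\<forall>i>j. T i = 0"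
    and norm: "1 + real j * \<tau> / C \<le> Xwnorm p (emb J (tree_vec T a))"
    and N_le: "N (emb J (tree_vec T a)) \<le> C + real j * \<epsilon> * \<tau>"
    by auto
  define z where "z = emb J (tree_vec T a)"
  have "0 \<le> real j * \<tau> / C"
    using \<open>0 < \<tau>\<close> \<open>0 < C\<close> by simp
  then have "1 \<le> Xwnorm p z"
    using norm unfolding z_def by linarith
  then obtain \<theta> b where \<theta>: "\<tau> / C \<le> \<theta>" and b: "lp_unit p b"
    and less: "N (emb J (tree_vec (T(Suc j := \<theta>)) (a(j := b)))) < N z + \<epsilon> * \<tau>"
    using tree_vec_extension_step[OF p E \<open>0 < c\<close> bounds \<open>j < J\<close> T a _ \<open>0 < \<tau>\<close> small]
    unfolding z_def by blast
  have "0 < \<tau> / C"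
    using \<open>0 < \<tau>\<close> \<open>0 < C\<close> by simp
  then have "Xwnorm p (emb J (tree_vec (T(Suc j := \<theta>)) (a(j := b)))) = Xwnorm p z + \<theta>"
    unfolding z_def using Xwnorm_tree_vec_extend[of p j J T \<theta> a b] p \<open>j < J\<close> T \<theta> a b by simp
  moreover have "real (Suc j) * \<tau> / C = real j * \<tau> / C + \<tau> / C"
    by (simp add: distrib_right add_divide_distrib)
  ultimately have "1 + real (Suc j) * \<tau> / C \<le> Xwnorm p (emb J (tree_vec (T(Suc j := \<theta>)) (a(j := b))))"
    using norm \<theta> unfolding z_def by linarith
  moreover have "real (Suc j) * \<epsilon> * \<tau> = real j * \<epsilon> * \<tau> + \<epsilon> * \<tau>"
    by (simp add: distrib_right)
  then have "N (emb J (tree_vec (T(Suc j := \<theta>)) (a(j := b)))) \<le> C + real (Suc j) * \<epsilon> * \<tau>"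
    using N_le less unfolding z_def by linarith
  moreover have "\<forall>l. lp_unit p ((a(j := b)) l)" "\<forall>i>Suc j. (T(Suc j := \<theta>)) i = 0"
    using a b T by auto
  ultimately show ?case
    by blast
qed

lemma equiv_aus_norm_tree_growth:
  assumes p: "1 < p" and E: "equiv_norm p N" and "0 < c" "0 < C"
    and bounds: "\<forall>x\<in>Xw p. c * Xwnorm p x \<le> N x \<and> N x \<le> C * Xwnorm p x"
    and "0 < \<tau>" and small: "\<forall>t. 0 < t \<and> t \<le> \<tau> / c \<longrightarrow> aus_modulus p N t < \<epsilon> * t"
  shows "c * (1 + real J * \<tau> / C) \<le> C + real J * \<epsilon> * \<tau>"
proof -
  obtain T a where norm: "1 + real J * \<tau> / C \<le> Xwnorm p (emb J (tree_vec T a))"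
    and N_le: "N (emb J (tree_vec T a)) \<le> C + real J * \<epsilon> * \<tau>"
    and "\<forall>l. lp_unit p (a l)" "\<forall>i>J. T i = 0"
    using equiv_aus_norm_tree_vec_construction[OF assms order_refl] by blast
  then have "emb J (tree_vec T a) \<in> Xw p"
    using Xw_emb_tree_vec[of p J T a] p by auto
  then have "c * Xwnorm p (emb J (tree_vec T a)) \<le> N (emb J (tree_vec T a))"
    using bounds by blast
  moreover have "c * (1 + real J * \<tau> / C) \<le> c * Xwnorm p (emb J (tree_vec T a))"
    using norm \<open>0 < c\<close> by simp
  ultimately show ?thesis
    using N_le by linarith
qed

lemma AUS_modulus_less:
  assumes "AUS p N" and "0 < \<epsilon>"
  obtains \<delta> where "0 < \<delta>" "\<And>t. 0 < t \<Longrightarrow> t \<le> \<delta> \<Longrightarrow> aus_modulus p N t < \<epsilon> * t"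
proof -
  have "eventually (\<lambda>t. aus_modulus p N t / t < \<epsilon>) (at_right 0)"
    using assms unfolding AUS_def by (intro order_tendstoD(2)) auto
  then obtain t0 where "0 < t0" and t0: "\<And>t. 0 < t \<Longrightarrow> t < t0 \<Longrightarrow> aus_modulus p N t / t < \<epsilon>"
    unfolding eventually_at_right_field by auto
  show ?thesis
  proof
    show "0 < t0 / 2"
      using \<open>0 < t0\<close> by simp
    show "aus_modulus p N t < \<epsilon> * t" if "0 < t" "t \<le> t0 / 2" for t
      using t0[of t] that \<open>0 < t0\<close> by (simp add: pos_divide_less_eq mult.commute)
  qed
qed

theorem corollary5p9:
  fixes p :: real
  assumes "1 < p"
  shows "\<not> (\<exists>N. equiv_norm p N \<and> AUS p N)"
proof
  assume "\<exists>N. equiv_norm p N \<and> AUS p N"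
  then obtain N where E: "equiv_norm p N" and A: "AUS p N"
    by blast
  obtain c C where cC: "0 < c" "0 < C" and bounds: "\<forall>x\<in>Xw p. c * Xwnorm p x \<le> N x \<and> N x \<le> C * Xwnorm p x"
    using equiv_norm_bounds[OF E] by blast
  define \<epsilon> where "\<epsilon> = c / (2 * C)"
  have "0 < \<epsilon>"
    unfolding \<epsilon>_def using cC by simp
  then obtain \<delta> where "0 < \<delta>" and small: "\<And>t. 0 < t \<Longrightarrow> t \<le> \<delta> \<Longrightarrow> aus_modulus p N t < \<epsilon> * t"
    using AUS_modulus_less[OF A] by blast
  define \<tau> where "\<tau> = c * \<delta>"
  have "0 < \<tau>" "\<tau> / c = \<delta>"
    unfolding \<tau>_def using cC \<open>0 < \<delta>\<close> by simp_all
  then have growth: "c * (1 + real J * \<tau> / C) \<le> C + real J * \<epsilon> * \<tau>" for J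
    using equiv_aus_norm_tree_growth[OF \<open>1 < p\<close> E cC bounds] small by simp
  define d where "d = c * \<tau> / C"
  have "0 < d"
    unfolding d_def using cC \<open>0 < \<tau>\<close> by simp
  obtain J :: nat where "2 * C / d < J"
    using reals_Archimedean2 by blast
  then have "2 * C < real J * d"
    using \<open>0 < d\<close> by (simp add: pos_divide_less_eq)
  moreover have "c + real J * d \<le> C + real J * d / 2"
    using growth[of J] cC unfolding d_def \<epsilon>_def by (simp add: field_simps)
  ultimately show False
    using cC by linarith
qed

end
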